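(* Let $p$ be a complex polynomial, $Y_p=\mathbf1-p(L)$, and assume $Y_p$ is injective and $p(L)^k\to0$ strongly as $k\to\infty$. Then $[N,\log Y_p]=Lp'(L)Y_p^{-1}$ on $\mathrm{ran}(Y_p)\cap\mathrm D(N\log Y_p)\cap\mathrm D(\log(Y_p)N)$, and $[N,\log(Y_p^* )]=-L^*p'(L^* )(Y_p^* )^{-1}$ on $\mathrm{ran}(Y_p^* )\cap\mathrm D(N\log(Y_p^* ))\cap\mathrm D(\log(Y_p^* )N)$.
   Context: $\ell^2=\ell^2(\mathbb N)$, $\mathbb N=\{0,1,\dots\}$, basis $(\xi_n)$; $N\xi_n=n\xi_n$ (self-adjoint, maximal domain); $L$ left shift ($L\xi_n=\xi_{n-1}$, $L\xi_0=0$), $L^*$ its adjoint (right shift). $p(L)$, $p'(L)$ are obtained by substitution; $p'(L^* )$ likewise. For a linear operator $A$, $\mathrm D(\log A)=\{f\in\bigcap_{k\ge0}\mathrm D(A^k):\lim_K\sum_{k=1}^K\frac1k(\mathbf1-A)^kf\text{ exists}\}$, $\log Af=-\sum_{k\ge1}\frac1k(\mathbf1-A)^kf$. Commutators $[A,B]=AB-BA$ on $\mathrm D(AB)\cap\mathrm D(BA)$. *)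

theory Defs
  imports Complex_Main "HOL-Computational_Algebra.Polynomial"
begin

type_synonym vec = "nat \<Rightarrow> complex"

definition l2 :: "vec set" where
  "l2 = {f. summable (\<lambda>n. (cmod (f n))^2)}"

definition l2norm :: "vec \<Rightarrow> real" where
  "l2norm f = sqrt (\<Sum>n. (cmod (f n))^2)"

definition Nop :: "vec \<Rightarrow> vec" where
  "Nop f = (\<lambda>n. of_nat n * f n)"

definition DN :: "vec set" where
  "DN = {f \<in> l2. Nop f \<in> l2}"

definition Lsh :: "vec \<Rightarrow> vec" where
  "Lsh f = (\<lambda>n. f (n + 1))"

definition Rsh :: "vec \<Rightarrow> vec" where
  "Rsh f = (\<lambda>n. if n = 0 then 0 else f (n - 1))"

definition polyL :: "complex poly \<Rightarrow> vec \<Rightarrow> vec" where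
  "polyL p f = (\<lambda>n. \<Sum>i\<le>degree p. coeff p i * f (n + i))"

definition polyLs :: "complex poly \<Rightarrow> vec \<Rightarrow> vec" where
  "polyLs p f = (\<lambda>n. \<Sum>i\<le>degree p. coeff p i * (if i \<le> n then f (n - i) else 0))"

text \<open>Y_p = 1 - p(L) and its adjoint Y_p^* = 1 - p(L)^* = 1 - pbar(L^*).\<close>
definition Yop :: "complex poly \<Rightarrow> vec \<Rightarrow> vec" where
  "Yop p f = (\<lambda>n. f n - polyL p f n)"

definition Ystar :: "complex poly \<Rightarrow> vec \<Rightarrow> vec" where
  "Ystar p f = (\<lambda>n. f n - polyLs (map_poly cnj p) f n)"

text \<open>Logarithm of an operator A (acting on sequences), via the series
  log A f = - sum_{k>=1} (1/k) (1 - A)^k f, convergence in l2-norm.\<close>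
definition logPartial :: "(vec \<Rightarrow> vec) \<Rightarrow> vec \<Rightarrow> nat \<Rightarrow> vec" where
  "logPartial A f K = (\<lambda>n. \<Sum>k=1..K. (1 / of_nat k) * (((\<lambda>h m. h m - A h m) ^^ k) f) n)"

definition l2_tendsto :: "(nat \<Rightarrow> vec) \<Rightarrow> vec \<Rightarrow> bool" where
  "l2_tendsto S g \<longleftrightarrow> g \<in> l2 \<and> (\<forall>K. S K \<in> l2) \<and>
     (\<lambda>K. l2norm (\<lambda>n. S K n - g n)) \<longlonglongrightarrow> 0"

definition logDom :: "(vec \<Rightarrow> vec) \<Rightarrow> vec set" where
  "logDom A = {f \<in> l2. (\<forall>k. (A ^^ k) f \<in> l2) \<and> (\<exists>g. l2_tendsto (logPartial A f) g)}"

definition logOp :: "(vec \<Rightarrow> vec) \<Rightarrow> vec \<Rightarrow> vec" where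
  "logOp A f = (\<lambda>n. - (THE g. l2_tendsto (logPartial A f) g) n)"

definition DNlog :: "(vec \<Rightarrow> vec) \<Rightarrow> vec set" where
  "DNlog A = {f \<in> logDom A. logOp A f \<in> DN}"

definition DlogN :: "(vec \<Rightarrow> vec) \<Rightarrow> vec set" where
  "DlogN A = {f \<in> DN. Nop f \<in> logDom A}"

end

theory Submission
  imports Defs
begin

text \<open>If [N, A] = s B with B commuting with A, then [N, A^(k+1)] = (k+1) s B A^k. Hence on
  f = (1 - A) g the commutator of N with the partial sum \<Sum>k=1..K. A^k f / k of -log(1 - A) f
  telescopes to s (B g - B A^K g). Strong decay of A^K g removes the last term, and the
  l2-convergence of the logarithm series yields the componentwise limit.
  For A = p(L) one has [N, p(L)] = -L p'(L); for the adjoint A = pbar(L*) one has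
  [N, pbar(L*)] = L* pbar'(L*), and the decay of pbar(L*)^K g follows from that of p(L)^K by
  duality against unit vectors.\<close>

lemma l2_add:
  assumes "f \<in> l2" "g \<in> l2"
  shows "(\<lambda>n. f n + g n) \<in> l2"
proof -
  have "(cmod (f n + g n))\<^sup>2 \<le> 2 * (cmod (f n))\<^sup>2 + 2 * (cmod (g n))\<^sup>2" for n
  proof -
    have "(cmod (f n + g n))\<^sup>2 \<le> (cmod (f n) + cmod (g n))\<^sup>2"
      by (simp add: power_mono norm_triangle_ineq)
    also have "\<dots> \<le> 2 * (cmod (f n))\<^sup>2 + 2 * (cmod (g n))\<^sup>2"
      using zero_le_power2[of "cmod (f n) - cmod (g n)"] by (simp add: power2_eq_square algebra_simps)
    finally show ?thesis .
  qed
  moreover have "summable (\<lambda>n. 2 * (cmod (f n))\<^sup>2 + 2 * (cmod (g n))\<^sup>2)"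
    using assms by (intro summable_add summable_mult) (auto simp: l2_def)
  ultimately show ?thesis
    unfolding l2_def by (auto intro: summable_comparison_test'[where N=0])
qed

lemma l2_scale: "f \<in> l2 \<Longrightarrow> (\<lambda>n. c * f n) \<in> l2"
  unfolding l2_def by (simp add: norm_mult power_mult_distrib summable_mult)

lemma l2_diff: "f \<in> l2 \<Longrightarrow> g \<in> l2 \<Longrightarrow> (\<lambda>n. f n - g n) \<in> l2"
  using l2_add[of f "\<lambda>n. - 1 * g n"] l2_scale[of g "- 1"] by simp

lemma l2_shift: "f \<in> l2 \<Longrightarrow> (\<lambda>n. f (n + i)) \<in> l2"
  unfolding l2_def using summable_ignore_initial_segment[of "\<lambda>n. (cmod (f n))\<^sup>2" i] by simp

lemma l2_zero: "(\<lambda>n. 0) \<in> l2"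
  by (simp add: l2_def)

lemma l2_sum: "finite I \<Longrightarrow> (\<And>i. i \<in> I \<Longrightarrow> F i \<in> l2) \<Longrightarrow> (\<lambda>n. \<Sum>i\<in>I. F i n) \<in> l2"
  by (induction I rule: finite_induct) (auto intro: l2_add l2_zero)

lemma l2_indicator: "(\<lambda>j. if j = m then 1 else 0) \<in> l2"
proof -
  have "(\<lambda>j. (cmod (if j = m then (1::complex) else 0))\<^sup>2) = (\<lambda>j. if j = m then 1 else 0)"
    by auto
  then show ?thesis by (simp add: l2_def)
qed

lemma norm_le_l2norm:
  assumes "f \<in> l2"
  shows "cmod (f n) \<le> l2norm f"
proof -
  have "(\<Sum>m\<in>{n}. (cmod (f m))\<^sup>2) \<le> (\<Sum>m. (cmod (f m))\<^sup>2)"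
    using assms by (intro sum_le_suminf) (auto simp: l2_def)
  then show ?thesis unfolding l2norm_def by (simp add: real_le_rsqrt)
qed

lemma l2norm_tendsto_zero_imp_tendsto_zero:
  assumes "\<And>K. S K \<in> l2" "(\<lambda>K. l2norm (S K)) \<longlonglongrightarrow> 0"
  shows "(\<lambda>K. S K n) \<longlonglongrightarrow> 0"
  by (rule tendsto_norm_zero_cancel, rule real_tendsto_sandwich[OF _ _ tendsto_const assms(2)])
     (auto intro!: always_eventually norm_le_l2norm assms(1))

lemma l2_tendsto_imp_tendsto:
  assumes "l2_tendsto S g"
  shows "(\<lambda>K. S K n) \<longlonglongrightarrow> g n"
proof -
  have "(\<lambda>K. S K n - g n) \<longlonglongrightarrow> 0"
    using assms unfolding l2_tendsto_def
    by (intro l2norm_tendsto_zero_imp_tendsto_zero[where S="\<lambda>K n. S K n - g n"]) (auto intro: l2_diff)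
  then show ?thesis by (simp add: LIM_zero_iff)
qed

lemma l2_tendsto_unique: "l2_tendsto S g1 \<Longrightarrow> l2_tendsto S g2 \<Longrightarrow> g1 = g2"
  by (rule ext, rule LIMSEQ_unique[OF l2_tendsto_imp_tendsto l2_tendsto_imp_tendsto])

lemma logPartial_tendsto_logOp:
  assumes "f \<in> logDom A"
  shows "(\<lambda>K. logPartial A f K n) \<longlonglongrightarrow> - logOp A f n"
proof -
  obtain g where g: "l2_tendsto (logPartial A f) g"
    using assms by (auto simp: logDom_def)
  then have "(THE g. l2_tendsto (logPartial A f) g) = g"
    using l2_tendsto_unique by blast
  then show ?thesis
    using l2_tendsto_imp_tendsto[OF g] by (simp add: logOp_def)
qed

lemma polyL_eq_sum: "degree p \<le> M \<Longrightarrow> polyL p f n = (\<Sum>i\<le>M. coeff p i * f (n + i))"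
  unfolding polyL_def by (rule sum.mono_neutral_left) (auto simp: coeff_eq_0)

lemma polyLs_eq_sum:
  "degree p \<le> M \<Longrightarrow> polyLs p f n = (\<Sum>i\<le>M. coeff p i * (if i \<le> n then f (n - i) else 0))"
  unfolding polyLs_def by (rule sum.mono_neutral_left) (auto simp: coeff_eq_0)

lemma polyL_l2: "f \<in> l2 \<Longrightarrow> polyL p f \<in> l2"
  unfolding polyL_def by (intro l2_sum l2_scale l2_shift) auto

lemma polyL_funpow_l2: "f \<in> l2 \<Longrightarrow> (polyL p ^^ k) f \<in> l2"
  by (induction k) (auto intro: polyL_l2)

lemma polyL_diff: "polyL p (\<lambda>n. u n - v n) = (\<lambda>n. polyL p u n - polyL p v n)"
  unfolding polyL_def by (simp add: sum_subtractf right_diff_distrib)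

lemma polyL_scale: "polyL p (\<lambda>n. c * u n) = (\<lambda>n. c * polyL p u n)"
  unfolding polyL_def by (simp add: sum_distrib_left mult_ac)

lemma polyLs_diff: "polyLs p (\<lambda>n. u n - v n) = (\<lambda>n. polyLs p u n - polyLs p v n)"
  unfolding polyLs_def
  by (rule ext, subst sum_subtractf[symmetric], rule sum.cong) (auto simp: algebra_simps)

lemma polyLs_scale: "polyLs p (\<lambda>n. c * u n) = (\<lambda>n. c * polyLs p u n)"
  unfolding polyLs_def by (auto simp: sum_distrib_left mult_ac intro!: sum.cong)

lemma polyL_Lsh: "polyL p (Lsh h) = Lsh (polyL p h)"
  unfolding polyL_def Lsh_def by (simp add: ac_simps)

lemma polyL_commute: "polyL p (polyL r h) = polyL r (polyL p h)"
  unfolding polyL_def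
  by (rule ext, simp add: sum_distrib_left, subst sum.swap) (simp add: ac_simps)

lemma polyLs_Rsh: "polyLs p (Rsh h) = Rsh (polyLs p h)"
proof (rule ext)
  fix n
  show "polyLs p (Rsh h) n = Rsh (polyLs p h) n"
    by (cases n) (auto simp: polyLs_def Rsh_def Suc_diff_le intro!: sum.cong sum.neutral)
qed

lemma polyLs_commute: "polyLs p (polyLs r h) = polyLs r (polyLs p h)"
proof (rule ext)
  fix n
  have double_sum: "polyLs p (polyLs r h) n =
     (\<Sum>i\<le>degree p. \<Sum>j\<le>degree r. coeff p i * coeff r j * (if i + j \<le> n then h (n - i - j) else 0))"
    for p r
    unfolding polyLs_def by (auto simp: sum_distrib_left ac_simps intro!: sum.cong; arith)
  show "polyLs p (polyLs r h) n = polyLs r (polyLs p h) n"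
    unfolding double_sum by (subst sum.swap) (auto simp: ac_simps intro!: sum.cong; arith)
qed

lemma funpow_diff:
  fixes A :: "vec \<Rightarrow> vec"
  assumes "\<And>u v. A (\<lambda>n. u n - v n) = (\<lambda>n. A u n - A v n)"
  shows "(A ^^ k) (\<lambda>n. u n - v n) = (\<lambda>n. (A ^^ k) u n - (A ^^ k) v n)"
  by (induction k arbitrary: u v) (simp_all add: assms)

definition commN :: "(vec \<Rightarrow> vec) \<Rightarrow> vec \<Rightarrow> vec" where
  "commN A h = (\<lambda>n. Nop (A h) n - A (Nop h) n)"

lemma commN_polyL: "commN (polyL p) h = (\<lambda>n. - Lsh (polyL (pderiv p) h) n)"
proof (rule ext)
  fix n
  have "commN (polyL p) h n = (\<Sum>i\<le>Suc (degree p). - (of_nat i * coeff p i * h (n + i)))"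
    unfolding commN_def Nop_def polyL_eq_sum[of p "Suc (degree p)", OF le_SucI[OF order_refl]]
    by (simp add: sum_distrib_left sum_subtractf[symmetric] algebra_simps)
  also have "\<dots> = - (\<Sum>i\<le>degree p. of_nat (Suc i) * coeff p (Suc i) * h (n + Suc i))"
    by (subst sum.atMost_Suc_shift) (simp add: sum_negf)
  also have "\<dots> = - Lsh (polyL (pderiv p) h) n"
    by (simp add: Lsh_def polyL_eq_sum[of "pderiv p" "degree p"] degree_pderiv coeff_pderiv)
  finally show "commN (polyL p) h n = - Lsh (polyL (pderiv p) h) n" .
qed

lemma commN_polyLs: "commN (polyLs p) h = Rsh (polyLs (pderiv p) h)"
proof (rule ext)
  fix n
  have "commN (polyLs p) h n =
      (\<Sum>i\<le>Suc (degree p). coeff p i * (if i \<le> n then of_nat i * h (n - i) else 0))"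
    unfolding commN_def Nop_def polyLs_eq_sum[of p "Suc (degree p)", OF le_SucI[OF order_refl]]
      sum_distrib_left sum_subtractf[symmetric]
    by (rule sum.cong) (auto simp: of_nat_diff algebra_simps)
  also have "\<dots> = (\<Sum>i\<le>degree p. coeff p (Suc i) *
      (if Suc i \<le> n then of_nat (Suc i) * h (n - Suc i) else 0))"
    by (subst sum.atMost_Suc_shift) simp
  also have "\<dots> = Rsh (polyLs (pderiv p) h) n"
    by (cases n) (auto simp: Rsh_def polyLs_eq_sum[of "pderiv p" "degree p"] degree_pderiv
        coeff_pderiv intro!: sum.cong)
  finally show "commN (polyLs p) h n = Rsh (polyLs (pderiv p) h) n" .
qed

lemma commN_comp:
  assumes "\<And>u v. A (\<lambda>n. u n - v n) = (\<lambda>n. A u n - A v n)"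
  shows "commN (A \<circ> C) h = (\<lambda>n. commN A (C h) n + A (commN C h) n)"
  unfolding commN_def by (simp add: assms)

lemma commN_funpow:
  fixes A B :: "vec \<Rightarrow> vec" and s :: complex
  assumes diff: "\<And>u v. A (\<lambda>n. u n - v n) = (\<lambda>n. A u n - A v n)"
    and scale: "\<And>c u. A (\<lambda>n. c * u n) = (\<lambda>n. c * A u n)"
    and comm: "\<And>h. commN A h = (\<lambda>n. s * B h n)"
    and AB: "\<And>h. A (B h) = B (A h)"
  shows "commN (A ^^ Suc k) h = (\<lambda>n. of_nat (Suc k) * s * B ((A ^^ k) h) n)"
proof (induction k)
  case 0
  show ?case using comm[of h] by simp
next
  case (Suc k)
  have "A ^^ Suc (Suc k) = A \<circ> A ^^ Suc k"
    by simp
  then have "commN (A ^^ Suc (Suc k)) h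
      = (\<lambda>n. s * B ((A ^^ Suc k) h) n + A (\<lambda>m. of_nat (Suc k) * s * B ((A ^^ k) h) m) n)"
    by (simp only: commN_comp[OF diff] Suc.IH comm)
  also have "\<dots> = (\<lambda>n. of_nat (Suc (Suc k)) * s * B ((A ^^ Suc k) h) n)"
    by (simp only: scale AB funpow.simps o_apply) (simp add: algebra_simps)
  finally show ?case .
qed

lemma commN_logPartial:
  fixes A B Y :: "vec \<Rightarrow> vec" and s :: complex
  assumes diff: "\<And>u v. A (\<lambda>n. u n - v n) = (\<lambda>n. A u n - A v n)"
    and scale: "\<And>c u. A (\<lambda>n. c * u n) = (\<lambda>n. c * A u n)"
    and comm: "\<And>h. commN A h = (\<lambda>n. s * B h n)"
    and AB: "\<And>h. A (B h) = B (A h)"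
    and diffB: "\<And>u v. B (\<lambda>n. u n - v n) = (\<lambda>n. B u n - B v n)"
    and Y: "\<And>h. Y h = (\<lambda>n. h n - A h n)"
  shows "commN (\<lambda>f. logPartial Y f K) (Y g) n = s * (B g n - B ((A ^^ K) g) n)"
proof (induction K)
  case 0
  show ?case by (simp add: commN_def logPartial_def Nop_def)
next
  case (Suc K)
  have one_minus_Y: "(\<lambda>h m. h m - Y h m) = A"
    by (intro ext) (simp add: Y)
  have "(A ^^ K) (Y g) = (\<lambda>m. (A ^^ K) g m - (A ^^ Suc K) g m)"
    by (simp add: Y funpow_diff[OF diff] funpow_swap1)
  then have last: "commN (A ^^ Suc K) (Y g) n
      = of_nat (Suc K) * s * (B ((A ^^ K) g) n - B ((A ^^ Suc K) g) n)"
    by (simp only: commN_funpow[OF diff scale comm AB] diffB)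
  have "commN (\<lambda>f. logPartial Y f (Suc K)) (Y g) n
      = commN (\<lambda>f. logPartial Y f K) (Y g) n + commN (A ^^ Suc K) (Y g) n / of_nat (Suc K)"
    unfolding commN_def logPartial_def one_minus_Y by (simp add: Nop_def diff_divide_distrib algebra_simps)
  also have "\<dots> = s * (B g n - B ((A ^^ K) g) n) + s * (B ((A ^^ K) g) n - B ((A ^^ Suc K) g) n)"
    by (simp only: Suc.IH last) (simp del: of_nat_Suc)
  finally show ?case
    by (simp add: algebra_simps)
qed

lemma commN_logOp:
  fixes A B Y :: "vec \<Rightarrow> vec" and s :: complex
  assumes diff: "\<And>u v. A (\<lambda>n. u n - v n) = (\<lambda>n. A u n - A v n)"
    and scale: "\<And>c u. A (\<lambda>n. c * u n) = (\<lambda>n. c * A u n)"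
    and comm: "\<And>h. commN A h = (\<lambda>n. s * B h n)"
    and AB: "\<And>h. A (B h) = B (A h)"
    and diffB: "\<And>u v. B (\<lambda>n. u n - v n) = (\<lambda>n. B u n - B v n)"
    and Y: "\<And>h. Y h = (\<lambda>n. h n - A h n)"
    and decay: "\<And>n. (\<lambda>K. B ((A ^^ K) g) n) \<longlonglongrightarrow> 0"
    and dom: "Y g \<in> logDom Y" "Nop (Y g) \<in> logDom Y"
  shows "commN (logOp Y) (Y g) = (\<lambda>n. - s * B g n)"
proof (rule ext)
  fix n
  have "(\<lambda>K. commN (\<lambda>f. logPartial Y f K) (Y g) n)
      \<longlonglongrightarrow> of_nat n * - logOp Y (Y g) n - - logOp Y (Nop (Y g)) n"
    unfolding commN_def Nop_def by (intro tendsto_intros logPartial_tendsto_logOp dom[unfolded Nop_def])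
  moreover have "(\<lambda>K. commN (\<lambda>f. logPartial Y f K) (Y g) n) \<longlonglongrightarrow> s * (B g n - 0)"
    unfolding commN_logPartial[OF diff scale comm AB diffB Y] by (intro tendsto_intros decay)
  ultimately show "commN (logOp Y) (Y g) n = - s * B g n"
    by (auto dest: LIMSEQ_unique simp: commN_def Nop_def algebra_simps)
qed

lemma polyL_tendsto_zero:
  assumes "\<And>m. (\<lambda>K. X K m) \<longlonglongrightarrow> 0"
  shows "(\<lambda>K. polyL r (X K) n) \<longlonglongrightarrow> 0"
  unfolding polyL_def by (intro tendsto_null_sum tendsto_mult_right_zero assms)

lemma polyLs_tendsto_zero:
  assumes "\<And>m. (\<lambda>K. X K m) \<longlonglongrightarrow> 0"
  shows "(\<lambda>K. polyLs r (X K) n) \<longlonglongrightarrow> 0"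
  unfolding polyLs_def
proof (rule tendsto_null_sum)
  fix i
  show "(\<lambda>K. coeff r i * (if i \<le> n then X K (n - i) else 0)) \<longlonglongrightarrow> 0"
    by (cases "i \<le> n") (auto intro!: tendsto_mult_right_zero assms)
qed

lemma sum_atMost_shift_vanishing:
  fixes u w :: "nat \<Rightarrow> complex"
  assumes w: "\<forall>k>M. w k = 0"
  shows "(\<Sum>j\<le>M. if i \<le> j then u (j - i) * w j else 0) = (\<Sum>j\<le>M. u j * w (j + i))"
proof (cases "i \<le> M")
  case True
  have "(\<Sum>j\<le>M. if i \<le> j then u (j - i) * w j else 0) = (\<Sum>j\<in>{x\<in>{..M}. i \<le> x}. u (j - i) * w j)"
    by (rule sum.inter_filter[symmetric]) simp
  also have "{x\<in>{..M}. i \<le> x} = {0 + i..(M - i) + i}"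
    using True by auto
  also have "(\<Sum>j\<in>{0 + i..(M - i) + i}. u (j - i) * w j) = (\<Sum>j\<in>{0..M - i}. u j * w (j + i))"
    by (subst sum.shift_bounds_cl_nat_ivl) simp
  also have "\<dots> = (\<Sum>j\<le>M. u j * w (j + i))"
    by (rule sum.mono_neutral_left) (use w in auto)
  finally show ?thesis .
next
  case False
  then show ?thesis using w by (auto intro!: sum.neutral)
qed

lemma polyL_funpow_vanishing: "\<forall>j>M. v j = 0 \<Longrightarrow> \<forall>j>M. (polyL p ^^ K) v j = 0"
  by (induction K) (simp_all add: polyL_def)

text \<open>pbar(L*) is the formal adjoint of p(L); pairing only against sequences supported in {..M}
  keeps every sum finite.\<close>

lemma polyLs_adjoint:
  assumes v: "\<forall>j>M. v j = 0"
  shows "(\<Sum>j\<le>M. polyLs (map_poly cnj p) u j * cnj (v j)) = (\<Sum>j\<le>M. u j * cnj (polyL p v j))"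
proof -
  have "(\<Sum>j\<le>M. polyLs (map_poly cnj p) u j * cnj (v j))
     = (\<Sum>j\<le>M. \<Sum>i\<le>degree p. cnj (coeff p i) * (if i \<le> j then u (j - i) * cnj (v j) else 0))"
    by (auto simp: polyLs_def degree_map_poly sum_distrib_right coeff_map_poly intro!: sum.cong)
  also have "\<dots> = (\<Sum>i\<le>degree p. cnj (coeff p i) * (\<Sum>j\<le>M. if i \<le> j then u (j - i) * cnj (v j) else 0))"
    by (subst sum.swap) (simp add: sum_distrib_left)
  also have "\<dots> = (\<Sum>i\<le>degree p. cnj (coeff p i) * (\<Sum>j\<le>M. u j * cnj (v (j + i))))"
    using sum_atMost_shift_vanishing[of M "\<lambda>j. cnj (v j)"] v by simp
  also have "\<dots> = (\<Sum>j\<le>M. u j * cnj (polyL p v j))"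
    unfolding polyL_def cnj_sum sum_distrib_left by (subst sum.swap) (simp add: ac_simps)
  finally show ?thesis .
qed

lemma polyLs_funpow_adjoint:
  assumes "\<forall>j>M. v j = 0"
  shows "(\<Sum>j\<le>M. (polyLs (map_poly cnj p) ^^ K) u j * cnj (v j))
       = (\<Sum>j\<le>M. u j * cnj ((polyL p ^^ K) v j))"
  using assms
proof (induction K arbitrary: v)
  case 0
  then show ?case by simp
next
  case (Suc K)
  have "(\<Sum>j\<le>M. (polyLs (map_poly cnj p) ^^ Suc K) u j * cnj (v j))
      = (\<Sum>j\<le>M. (polyLs (map_poly cnj p) ^^ K) u j * cnj (polyL p v j))"
    using polyLs_adjoint[OF Suc.prems] by simp
  also have "\<dots> = (\<Sum>j\<le>M. u j * cnj ((polyL p ^^ K) (polyL p v) j))"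
    using Suc.IH polyL_funpow_vanishing[OF Suc.prems, of 1] by simp
  finally show ?case
    by (simp add: funpow_swap1)
qed

lemma polyLs_funpow_tendsto_zero:
  assumes "\<And>j. (\<lambda>K. (polyL p ^^ K) (\<lambda>i. if i = m then 1 else 0) j) \<longlonglongrightarrow> 0"
  shows "(\<lambda>K. (polyLs (map_poly cnj p) ^^ K) u m) \<longlonglongrightarrow> 0"
proof -
  have "(polyLs (map_poly cnj p) ^^ K) u m
      = (\<Sum>j\<le>m. u j * cnj ((polyL p ^^ K) (\<lambda>i. if i = m then 1 else 0) j))" for K
    using polyLs_funpow_adjoint[where M=m and v="\<lambda>i. if i = m then 1 else 0" and p=p and K=K and u=u]
    by (simp add: if_distrib cong: if_cong)
  moreover have "(\<lambda>K. \<Sum>j\<le>m. u j * cnj ((polyL p ^^ K) (\<lambda>i. if i = m then 1 else 0) j)) \<longlonglongrightarrow> 0"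
    by (intro tendsto_null_sum tendsto_mult_right_zero tendsto_cnj[of _ 0, simplified] assms)
  ultimately show ?thesis
    by simp
qed

lemma pderiv_map_poly_cnj: "pderiv (map_poly cnj p) = map_poly cnj (pderiv p)"
  by (rule poly_eqI) (simp add: coeff_pderiv coeff_map_poly)

lemma commN_log_Yop:
  assumes strong: "\<And>h. h \<in> l2 \<Longrightarrow> (\<lambda>k. l2norm ((polyL p ^^ k) h)) \<longlonglongrightarrow> 0"
    and f: "f \<in> Yop p ` l2" "f \<in> DNlog (Yop p)" "f \<in> DlogN (Yop p)"
  shows "commN (logOp (Yop p)) f = Lsh (polyL (pderiv p) (inv_into l2 (Yop p) f))"
proof -
  define g where "g = inv_into l2 (Yop p) f"
  have g: "g \<in> l2" and fg: "f = Yop p g"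
    using f(1) by (auto simp: g_def inv_into_into f_inv_into_f)
  have "(\<lambda>K. (polyL p ^^ K) g m) \<longlonglongrightarrow> 0" for m
    by (rule l2norm_tendsto_zero_imp_tendsto_zero) (auto intro: polyL_funpow_l2 g strong)
  then have decay: "(\<lambda>K. Lsh (polyL (pderiv p) ((polyL p ^^ K) g)) n) \<longlonglongrightarrow> 0" for n
    unfolding Lsh_def by (rule polyL_tendsto_zero)
  have comm: "commN (polyL p) h = (\<lambda>n. - 1 * Lsh (polyL (pderiv p) h) n)" for h
    by (simp add: commN_polyL)
  have AB: "polyL p (Lsh (polyL (pderiv p) h)) = Lsh (polyL (pderiv p) (polyL p h))" for h
    by (simp add: polyL_Lsh polyL_commute)
  have diffB: "Lsh (polyL (pderiv p) (\<lambda>n. u n - v n))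
      = (\<lambda>n. Lsh (polyL (pderiv p) u) n - Lsh (polyL (pderiv p) v) n)" for u v
    by (simp add: polyL_diff Lsh_def)
  have dom: "Yop p g \<in> logDom (Yop p)" "Nop (Yop p g) \<in> logDom (Yop p)"
    using f fg by (auto simp: DNlog_def DlogN_def)
  have "commN (logOp (Yop p)) f = (\<lambda>n. - (- 1) * Lsh (polyL (pderiv p) g) n)"
    unfolding fg by (rule commN_logOp[where A="polyL p", OF polyL_diff polyL_scale comm AB diffB Yop_def decay dom])
  then show ?thesis
    by (simp add: g_def)
qed

lemma commN_log_Ystar:
  assumes strong: "\<And>h. h \<in> l2 \<Longrightarrow> (\<lambda>k. l2norm ((polyL p ^^ k) h)) \<longlonglongrightarrow> 0"
    and f: "f \<in> Ystar p ` l2" "f \<in> DNlog (Ystar p)" "f \<in> DlogN (Ystar p)"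
  shows "commN (logOp (Ystar p)) f = (\<lambda>n. - Rsh (polyLs (map_poly cnj (pderiv p)) (inv_into l2 (Ystar p) f)) n)"
proof -
  define g where "g = inv_into l2 (Ystar p) f"
  have fg: "f = Ystar p g"
    using f(1) by (auto simp: g_def f_inv_into_f)
  have "(\<lambda>K. (polyL p ^^ K) (\<lambda>i. if i = m then 1 else 0) j) \<longlonglongrightarrow> 0" for m j
    by (rule l2norm_tendsto_zero_imp_tendsto_zero) (auto intro: polyL_funpow_l2 l2_indicator strong)
  then have "(\<lambda>K. (polyLs (map_poly cnj p) ^^ K) g m) \<longlonglongrightarrow> 0" for m
    by (rule polyLs_funpow_tendsto_zero)
  then have decay: "(\<lambda>K. Rsh (polyLs (map_poly cnj (pderiv p)) ((polyLs (map_poly cnj p) ^^ K) g)) n)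
      \<longlonglongrightarrow> 0" for n
    by (cases n) (auto simp: Rsh_def intro!: polyLs_tendsto_zero)
  have comm: "commN (polyLs (map_poly cnj p)) h = (\<lambda>n. 1 * Rsh (polyLs (map_poly cnj (pderiv p)) h) n)"
    for h
    by (simp add: commN_polyLs pderiv_map_poly_cnj)
  have AB: "polyLs (map_poly cnj p) (Rsh (polyLs (map_poly cnj (pderiv p)) h))
      = Rsh (polyLs (map_poly cnj (pderiv p)) (polyLs (map_poly cnj p) h))" for h
    by (simp add: polyLs_Rsh polyLs_commute)
  have diffB: "Rsh (polyLs (map_poly cnj (pderiv p)) (\<lambda>n. u n - v n))
      = (\<lambda>n. Rsh (polyLs (map_poly cnj (pderiv p)) u) n - Rsh (polyLs (map_poly cnj (pderiv p)) v) n)"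
    for u v
    by (simp add: polyLs_diff Rsh_def fun_eq_iff)
  have dom: "Ystar p g \<in> logDom (Ystar p)" "Nop (Ystar p g) \<in> logDom (Ystar p)"
    using f fg by (auto simp: DNlog_def DlogN_def)
  have "commN (logOp (Ystar p)) f = (\<lambda>n. - 1 * Rsh (polyLs (map_poly cnj (pderiv p)) g) n)"
    unfolding fg by (rule commN_logOp[where A="polyLs (map_poly cnj p)", OF polyLs_diff polyLs_scale comm AB diffB
          Ystar_def decay dom])
  then show ?thesis
    by (simp add: g_def)
qed

theorem mainTheorem14:
  fixes p :: "complex poly"
  assumes inj: "inj_on (Yop p) l2"
    and strong: "\<forall>f\<in>l2. (\<lambda>k. l2norm ((polyL p ^^ k) f)) \<longlonglongrightarrow> 0"
  shows "(\<forall>f \<in> (Yop p ` l2) \<inter> DNlog (Yop p) \<inter> DlogN (Yop p).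
           (\<lambda>n. Nop (logOp (Yop p) f) n - logOp (Yop p) (Nop f) n)
             = Lsh (polyL (pderiv p) (inv_into l2 (Yop p) f)))
       \<and> (\<forall>f \<in> (Ystar p ` l2) \<inter> DNlog (Ystar p) \<inter> DlogN (Ystar p).
           (\<lambda>n. Nop (logOp (Ystar p) f) n - logOp (Ystar p) (Nop f) n)
             = (\<lambda>n. - Rsh (polyLs (map_poly cnj (pderiv p)) (inv_into l2 (Ystar p) f)) n))"
  using commN_log_Yop[of p] commN_log_Ystar[of p] strong unfolding commN_def by blast

end
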